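(* Let $f_V^0(u)=(32u^2-1)\cos2u+\cos6u-8u\sin2u$ and let $F[f_V^0]=\inf\{u>0:f_V^0(u)=0\}$ be its first positive root. Then $F[f_V^0]\in(\frac58\pi,\frac34\pi)$, $f_V^0$ has a simple root at $F[f_V^0]$, and $f_V^0(u)<0$ for all $u\in(0,F[f_V^0])$. *)

theory Defs
  imports Complex_Main
begin

definition fV0 :: "real \<Rightarrow> real" where
  "fV0 u = (32 * u^2 - 1) * cos (2*u) + cos (6*u) - 8 * u * sin (2*u)"

definition F_fV0 :: real where
  "F_fV0 = Inf {u. u > 0 \<and> fV0 u = 0}"

end

theory Submission
  imports Defs
begin

text \<open>
  Since \<open>cos 6u = 4 cos\<^sup>3 2u - 3 cos 2u\<close>, we have \<open>fV0 u = 4 hV0 (2u)\<close> with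
  \<open>hV0 x = 2x\<^sup>2 cos x - cos x sin\<^sup>2 x - x sin x\<close>. On \<open>(0, \<pi>/2)\<close> the AM-GM inequality
  \<open>x sin x + cos x sin\<^sup>2 x \<ge> 2 (x cos x sin\<^sup>3 x)\<^sup>1\<^sup>/\<^sup>2\<close> together with \<open>sin\<^sup>3 x > x\<^sup>3 cos x\<close>
  (a consequence of the Taylor bounds of \<open>sin\<close> and \<open>cos\<close>) gives \<open>hV0 x < 0\<close>; on
  \<open>[\<pi>/2, 5\<pi>/4]\<close> the sign of \<open>hV0\<close> is read off from crude bounds. Hence \<open>fV0 < 0\<close> on
  \<open>(0, 5\<pi>/8]\<close>. On \<open>[5\<pi>/8, 3\<pi>/4]\<close> the derivative of \<open>fV0\<close> is positive and
  \<open>fV0 (3\<pi>/4) = 6\<pi> > 0\<close>, so the first positive root is the unique, simple root in that interval.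
\<close>

lemma sin_ge_cubic_taylor:
  fixes x :: real
  assumes "0 \<le> x" "x \<le> pi"
  shows "x - x^3/6 \<le> sin x"
proof (cases "x = 0")
  case False
  then obtain t where t: "0 < t" "t < x"
    "sin x = (\<Sum>m<4. sin_coeff m * x ^ m) + (sin (t + 1/2 * real 4 * pi) / fact 4) * x ^ 4"
    using Maclaurin_sin_expansion3[of 4 x] assms by auto
  have "sin (t + 1/2 * real 4 * pi) = sin t"
    using sin_periodic[of t] by (simp add: algebra_simps)
  moreover have "sin t \<ge> 0"
    using t assms by (intro sin_ge_zero) auto
  moreover have "(\<Sum>m<4. sin_coeff m * x ^ m) = x - x^3/6"
    by (simp add: sin_coeff_def lessThan_nat_numeral fact_numeral)
  ultimately show ?thesis
    using t(3) assms by (simp add: fact_numeral)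
qed simp

lemma cos_le_quartic_taylor:
  fixes x :: real
  assumes "0 \<le> x" "x \<le> pi"
  shows "cos x \<le> 1 - x^2/2 + x^4/24"
proof (cases "x = 0")
  case False
  then obtain t where t: "0 < t" "t < x"
    "cos x = (\<Sum>m<5. cos_coeff m * x ^ m) + (cos (t + 1/2 * real 5 * pi) / fact 5) * x ^ 5"
    using Maclaurin_cos_expansion2[of x 5] assms by auto
  have "t + 1/2 * real 5 * pi = (t + pi/2) + 2*pi"
    by simp
  then have "cos (t + 1/2 * real 5 * pi) = - sin t"
    by (simp only: cos_periodic) (simp add: cos_add)
  moreover have "sin t \<ge> 0"
    using t assms by (intro sin_ge_zero) auto
  moreover have "(\<Sum>m<5. cos_coeff m * x ^ m) = 1 - x^2/2 + x^4/24"
    by (simp add: cos_coeff_def lessThan_nat_numeral fact_numeral)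
  ultimately show ?thesis
    using t(3) assms by (simp add: fact_numeral)
qed simp

lemma first_positive_root_of_crossing:
  fixes f f' :: "real \<Rightarrow> real"
  assumes deriv: "\<And>x. (f has_real_derivative f' x) (at x)"
    and neg: "\<And>x. 0 < x \<Longrightarrow> x \<le> a \<Longrightarrow> f x < 0"
    and deriv_pos: "\<And>x. a \<le> x \<Longrightarrow> x \<le> b \<Longrightarrow> 0 < f' x"
    and "0 < a" "a \<le> b" "0 < f b"
  obtains r where "a < r" "r < b" "f r = 0" "0 < f' r"
    "\<And>u. 0 < u \<Longrightarrow> u < r \<Longrightarrow> f u < 0" "Inf {u. 0 < u \<and> f u = 0} = r"
proof -
  have "f a < 0"
    using neg \<open>0 < a\<close> by simp
  moreover have "continuous_on {a..b} f"
    using deriv by (intro continuous_at_imp_continuous_on ballI DERIV_isCont)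
  ultimately obtain r where "a \<le> r" "r \<le> b" "f r = 0"
    using IVT'[of f a 0 b] \<open>a \<le> b\<close> \<open>0 < f b\<close> by auto
  have "a < r" "r < b"
    using \<open>a \<le> r\<close> \<open>r \<le> b\<close> \<open>f a < 0\<close> \<open>0 < f b\<close> \<open>f r = 0\<close> by (metis less_irrefl order_le_less)+
  have below: "f u < 0" if "0 < u" "u < r" for u
  proof (cases "u \<le> a")
    case True
    then show ?thesis
      using neg that by blast
  next
    case False
    have "\<exists>y. DERIV f x :> y \<and> 0 < y" if "u \<le> x" "x \<le> r" for x
      using deriv deriv_pos[of x] that False \<open>r < b\<close> by force
    then have "f u < f r"
      using DERIV_pos_imp_increasing[of u r f] \<open>u < r\<close> by blast
    then show ?thesis
      using \<open>f r = 0\<close> by simp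
  qed
  have "Inf {u. 0 < u \<and> f u = 0} = r"
  proof (rule cInf_eq_minimum)
    show "r \<in> {u. 0 < u \<and> f u = 0}"
      using \<open>0 < a\<close> \<open>a < r\<close> \<open>f r = 0\<close> by simp
  next
    fix x
    assume "x \<in> {u. 0 < u \<and> f u = 0}"
    then show "r \<le> x"
      using below[of x] by force
  qed
  then show thesis
    using that \<open>a < r\<close> \<open>r < b\<close> \<open>f r = 0\<close> below deriv_pos[of r] by simp
qed

definition hV0 :: "real \<Rightarrow> real" where
  "hV0 x = 2 * x^2 * cos x - cos x * sin x ^ 2 - x * sin x"

lemma hV0_eq_cos_mult: "hV0 x = cos x * (2 * x^2 - sin x ^ 2) - x * sin x"
  unfolding hV0_def by (simp add: algebra_simps)

lemma fV0_eq_hV0: "fV0 u = 4 * hV0 (2*u)"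
proof -
  define c s where "c = cos (2*u)" and "s = sin (2*u)"
  have treble: "cos (6*u) = 4 * c^3 - 3 * c"
    using cos_treble_cos[of "2*u"] unfolding c_def by (simp add: mult.assoc)
  have "fV0 u = (32 * u^2 - 1) * c + (4 * c^3 - 3 * c) - 8 * u * s"
    unfolding fV0_def treble c_def s_def by simp
  also have "\<dots> = 4 * (2 * (2*u)^2 * c - c * (1 - c^2) - (2*u) * s)"
    by algebra
  also have "\<dots> = 4 * (2 * (2*u)^2 * c - c * s^2 - (2*u) * s)"
    unfolding s_def c_def by (simp add: sin_squared_eq)
  finally show ?thesis
    unfolding hV0_def c_def s_def .
qed

lemma cube_mult_cos_less_sin_cube:
  fixes x :: real
  assumes "0 < x" "x < pi/2"
  shows "x^3 * cos x < sin x ^ 3"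
proof -
  have "x < 2"
    using assms pi_less_4 by linarith
  then have "x^2 < 4"
    using assms by (simp add: power_strict_mono[of x 2 2, simplified])
  then have cubic_pos: "0 < x - x^3/6"
    using assms by (simp add: power3_eq_cube power2_eq_square)
  have "x^3 * cos x \<le> x^3 * (1 - x^2/2 + x^4/24)"
    using cos_le_quartic_taylor[of x] assms by (intro mult_left_mono) auto
  also have "\<dots> < (x - x^3/6)^3"
  proof -
    have "(x - x^3/6)^3 - x^3 * (1 - x^2/2 + x^4/24) = x^7 * (1/24 - x^2/216)"
      by (simp add: field_simps) algebra
    moreover have "0 < x^7 * (1/24 - x^2/216)"
      using assms \<open>x^2 < 4\<close> by simp
    ultimately show ?thesis
      by linarith
  qed
  also have "\<dots> \<le> sin x ^ 3"
    using sin_ge_cubic_taylor[of x] assms cubic_pos by (intro power_mono) auto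
  finally show ?thesis .
qed

lemma hV0_neg_first_quadrant:
  assumes "0 < x" "x < pi/2"
  shows "hV0 x < 0"
proof -
  define c s where "c = cos x" and "s = sin x"
  have "0 < c" "0 < s"
    unfolding c_def s_def using assms by (auto intro: cos_gt_zero_pi sin_gt_zero)
  \<comment> \<open>AM-GM: \<open>4AB \<le> (A + B)\<^sup>2\<close> with \<open>A = x s\<close>, \<open>B = c s\<^sup>2\<close>.\<close>
  have "(2 * x^2 * c)^2 = 4 * x * c * (x^3 * c)"
    by (simp add: power2_eq_square power3_eq_cube)
  also have "\<dots> < 4 * x * c * s^3"
    using cube_mult_cos_less_sin_cube[OF assms] assms \<open>0 < c\<close>
    unfolding c_def s_def by (intro mult_strict_left_mono) auto
  also have "\<dots> = 4 * (x * s) * (c * s^2)"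
    by (simp add: power2_eq_square power3_eq_cube)
  also have "\<dots> \<le> (x * s + c * s^2)^2"
    using zero_le_power2[of "x * s - c * s^2"] by (simp add: power2_eq_square algebra_simps)
  finally have "(2 * x^2 * c)^2 < (x * s + c * s^2)^2" .
  moreover have "0 \<le> x * s + c * s^2"
    using assms \<open>0 < c\<close> \<open>0 < s\<close> by simp
  ultimately have "2 * x^2 * c < x * s + c * s^2"
    by (rule power_less_imp_less_base)
  then show ?thesis
    unfolding hV0_def c_def s_def by simp
qed

lemma hV0_neg_second_quadrant:
  assumes "pi/2 \<le> x" "x \<le> pi"
  shows "hV0 x < 0"
proof -
  have "1 \<le> x"
    using assms pi_ge_two by linarith
  then have "1 \<le> x^2"
    by (simp add: one_le_power)
  moreover have "sin x ^ 2 \<le> 1"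
    by (simp add: abs_square_le_1)
  ultimately have "0 < 2 * x^2 - sin x ^ 2"
    by linarith
  moreover have "cos x \<le> 0"
    using assms cos_monotone_0_pi_le[of "pi/2" x] by simp
  ultimately have first: "cos x * (2 * x^2 - sin x ^ 2) \<le> 0"
    by (simp add: mult_nonpos_nonneg)
  show ?thesis
  proof (cases "x = pi")
    case False
    then have "0 < x * sin x"
      using assms \<open>1 \<le> x\<close> by (intro mult_pos_pos sin_gt_zero) auto
    then show ?thesis
      using first by (simp add: hV0_eq_cos_mult)
  next
    case True
    then show ?thesis
      using \<open>0 < 2 * x^2 - sin x ^ 2\<close> by (simp add: hV0_eq_cos_mult)
  qed
qed

lemma hV0_neg_third_quadrant:
  assumes "pi \<le> x" "x \<le> 5/4*pi"
  shows "hV0 x < 0"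
proof -
  have "2 \<le> x"
    using assms pi_ge_two by linarith
  have "1/2 \<le> cos (x - pi)"
    using assms cos_monotone_0_pi_le[of "x - pi" "pi/3"] by (simp add: cos_60)
  then have cos_le: "cos x \<le> -1/2"
    by (simp add: cos_diff)
  have "cos x * (2 * x^2 - sin x ^ 2) \<le> cos x * (2 * x^2 - 1)"
    using cos_le by (intro mult_left_mono_neg) (auto simp: abs_square_le_1)
  also have "\<dots> \<le> -1/2 * (2 * x^2 - 1)"
    using cos_le \<open>2 \<le> x\<close> mult_mono[of 1 x 1 x] by (intro mult_right_mono) (auto simp: power2_eq_square)
  finally have "cos x * (2 * x^2 - sin x ^ 2) \<le> 1/2 - x^2"
    by (simp add: algebra_simps)
  moreover have "- (x * sin x) \<le> x"
    using mult_left_mono[of "-1" "sin x" x] \<open>2 \<le> x\<close> by simp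
  moreover have "2 * x \<le> x^2"
    using \<open>2 \<le> x\<close> by (simp add: power2_eq_square mult_right_mono)
  ultimately show ?thesis
    using \<open>2 \<le> x\<close> by (simp add: hV0_eq_cos_mult)
qed

lemma fV0_neg:
  assumes "0 < u" "u \<le> 5/8*pi"
  shows "fV0 u < 0"
proof -
  have "2*u < pi/2 \<or> pi/2 \<le> 2*u \<and> 2*u \<le> pi \<or> pi \<le> 2*u \<and> 2*u \<le> 5/4*pi"
    using assms by auto
  then have "hV0 (2*u) < 0"
    using hV0_neg_first_quadrant hV0_neg_second_quadrant hV0_neg_third_quadrant assms by auto
  then show ?thesis
    by (simp add: fV0_eq_hV0)
qed

definition fV0' :: "real \<Rightarrow> real" where
  "fV0' u = 48 * u * cos (2*u) - (64 * u^2 + 6) * sin (2*u) - 6 * sin (6*u)"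

lemma DERIV_fV0: "(fV0 has_real_derivative fV0' u) (at u)"
  unfolding fV0_def [abs_def] fV0'_def
  by (rule derivative_eq_intros refl | simp add: algebra_simps)+

lemma fV0'_pos:
  assumes "5/8*pi \<le> u" "u \<le> 3/4*pi"
  shows "0 < fV0' u"
proof -
  have "5/4 \<le> u"
    using assms pi_ge_two by linarith
  have "sin (pi/4) \<le> sin (2*u - pi)"
    using assms by (intro sin_monotone_2pi_le) auto
  moreover have "7/5 \<le> sqrt 2"
    by (rule real_le_rsqrt) (simp add: power2_eq_square)
  ultimately have sin_le: "sin (2*u) \<le> -7/10"
    by (simp add: sin_45 sin_diff)
  have "-(48 * u) \<le> 48 * u * cos (2*u)"
    using mult_left_mono[of "-1" "cos (2*u)" "48*u"] \<open>5/4 \<le> u\<close> by simp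
  moreover have "(64 * u^2 + 6) * sin (2*u) \<le> -(224/5 * u^2) - 21/5"
    using mult_left_mono[OF sin_le, of "64 * u^2 + 6"] by (simp add: field_simps)
  moreover have "5/4 * u \<le> u^2"
    using \<open>5/4 \<le> u\<close> by (simp add: power2_eq_square mult_right_mono)
  moreover have "sin (6*u) \<le> 1"
    by simp
  ultimately show ?thesis
    unfolding fV0'_def using \<open>5/4 \<le> u\<close> by linarith
qed

lemma fV0_three_quarter_pi: "fV0 (3/4*pi) = 6*pi"
proof -
  have "cos (3/2*pi) = 0" "sin (3/2*pi) = -1" "cos (9/2*pi) = 0"
    using cos_periodic_pi[of "pi/2"] sin_periodic_pi[of "pi/2"] cos_periodic[of "pi/2 + 2*pi"]
      cos_periodic[of "pi/2"]
    by (simp_all add: algebra_simps)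
  then show ?thesis
    unfolding fV0_def by simp
qed

theorem lemma5p2:
  shows "F_fV0 \<in> {5/8*pi<..<3/4*pi}
    \<and> fV0 F_fV0 = 0
    \<and> (\<exists>d. (fV0 has_real_derivative d) (at F_fV0) \<and> d \<noteq> 0)
    \<and> (\<forall>u. 0 < u \<and> u < F_fV0 \<longrightarrow> fV0 u < 0)"
proof -
  obtain r where "5/8*pi < r" "r < 3/4*pi" "fV0 r = 0" "0 < fV0' r"
    "\<And>u. 0 < u \<Longrightarrow> u < r \<Longrightarrow> fV0 u < 0" "Inf {u. 0 < u \<and> fV0 u = 0} = r"
  proof (rule first_positive_root_of_crossing[of fV0 fV0' "5/8*pi" "3/4*pi"])
    show "(fV0 has_real_derivative fV0' x) (at x)" for x
      by (rule DERIV_fV0)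
    show "fV0 x < 0" if "0 < x" "x \<le> 5/8*pi" for x
      using that by (rule fV0_neg)
    show "0 < fV0' x" if "5/8*pi \<le> x" "x \<le> 3/4*pi" for x
      using that by (rule fV0'_pos)
    show "0 < fV0 (3/4*pi)"
      unfolding fV0_three_quarter_pi by simp
  qed simp_all
  then show ?thesis
    unfolding F_fV0_def using DERIV_fV0[of r] by auto
qed

end
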